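(* Let $\gamma\geq0$, $G=(V,E,\omega)\in\mathcal C_\gamma$, and let $w:[0,\infty)\to\mathcal V$ be the solution of $\frac{dw}{dt}=-Lw$, $w(0)=w_0\in\mathcal V$. Let $c_1,c_2\in\mathbb R$ be such that $c_1\leq(w_0)_i\leq c_2$ for all $i\in V$. Then $c_1\leq w_i(t)\leq c_2$ for all $t\geq0$ and $i\in V$. In particular, $\|w(t)\|_{\mathcal V,\infty}\leq\|w_0\|_{\mathcal V,\infty}$ for all $t\geq0$.
   Context: $\mathcal{G}$ is the set of finite, simple, connected, undirected, edge-weighted graphs $G=(V,E,\omega)$ with $V=\{1,\dots,n\}$, $n\geq2$, weights $\omega_{ij}=\omega_{ji}>0$ on edges, $0$ otherwise. $d_i=\sum_j\omega_{ij}$. $\mathcal V$: functions $V\to\mathbb R$; $\|u\|_{\mathcal V,\infty}=\max_i|u_i|$. Fixed $r\in[0,1]$: $(\Delta u)_i=d_i^{-r}\sum_j\omega_{ij}(u_i-u_j)$, $\mathcal M(u)=\sum_id_i^ru_i$, $\mathrm{vol}(V)=\sum_id_i^r$, $\mathcal A(u)=\frac{\mathcal M(u)}{\mathrm{vol}(V)}\chi_V$. For $u\in\mathcal V$ let $\varphi$ be the unique solution of $\Delta\varphi=u-\mathcal A(u)$, $\mathcal M(\varphi)=0$, and $Lu:=\Delta u+\gamma\varphi$. Equilibrium measure $\nu^S$ ($S\subsetneq V$): unique $\nu$ with $(\Delta\nu)_i=1$ on $S$, $\nu=0$ off $S$. $f^j:=\nu^{V\setminus\{j\}}-\mathcal A(\nu^{V\setminus\{j\}})$.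 $\mathcal C^0=\{G\in\mathcal G:\forall j\ \forall i\neq j:\ \omega_{ij}>0\text{ or }f^j_i\geq0\}$; for $\gamma>0$, $\mathcal C_\gamma=\{G\in\mathcal C^0:\forall j\ \forall i\neq j:\ \omega_{ij}=0\text{ or }d_i^{-r}\omega_{ij}+\gamma\frac{d_j^r}{\mathrm{vol}(V)}f^j_i>0\}$; $\mathcal C_0:=\mathcal G$. *)

theory Defs
  imports "HOL-Analysis.Analysis"
begin

definition Vset :: "nat \<Rightarrow> nat set" where
  "Vset n = {1..n}"

definition is_graph :: "nat \<Rightarrow> (nat \<Rightarrow> nat \<Rightarrow> real) \<Rightarrow> bool" where
  "is_graph n \<omega> \<longleftrightarrow> n \<ge> 2
     \<and> (\<forall>i j. \<omega> i j = \<omega> j i)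
     \<and> (\<forall>i j. \<omega> i j \<ge> 0)
     \<and> (\<forall>i. \<omega> i i = 0)
     \<and> (\<forall>i j. (i \<notin> Vset n \<or> j \<notin> Vset n) \<longrightarrow> \<omega> i j = 0)
     \<and> (\<forall>i\<in>Vset n. \<forall>j\<in>Vset n.
          (\<lambda>a b. a \<in> Vset n \<and> b \<in> Vset n \<and> \<omega> a b > 0)\<^sup>*\<^sup>* i j)"

definition deg :: "nat \<Rightarrow> (nat \<Rightarrow> nat \<Rightarrow> real) \<Rightarrow> nat \<Rightarrow> real" where
  "deg n \<omega> i = (\<Sum>j\<in>Vset n. \<omega> i j)"

definition Lap :: "real \<Rightarrow> nat \<Rightarrow> (nat \<Rightarrow> nat \<Rightarrow> real) \<Rightarrow> (nat \<Rightarrow> real) \<Rightarrow> nat \<Rightarrow> real" where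
  "Lap r n \<omega> u i = deg n \<omega> i powr (-r) * (\<Sum>j\<in>Vset n. \<omega> i j * (u i - u j))"

definition mass :: "real \<Rightarrow> nat \<Rightarrow> (nat \<Rightarrow> nat \<Rightarrow> real) \<Rightarrow> (nat \<Rightarrow> real) \<Rightarrow> real" where
  "mass r n \<omega> u = (\<Sum>i\<in>Vset n. deg n \<omega> i powr r * u i)"

definition vol :: "real \<Rightarrow> nat \<Rightarrow> (nat \<Rightarrow> nat \<Rightarrow> real) \<Rightarrow> real" where
  "vol r n \<omega> = (\<Sum>i\<in>Vset n. deg n \<omega> i powr r)"

definition avg :: "real \<Rightarrow> nat \<Rightarrow> (nat \<Rightarrow> nat \<Rightarrow> real) \<Rightarrow> (nat \<Rightarrow> real) \<Rightarrow> nat \<Rightarrow> real" where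
  "avg r n \<omega> u i = (if i \<in> Vset n then mass r n \<omega> u / vol r n \<omega> else 0)"

definition phi :: "real \<Rightarrow> nat \<Rightarrow> (nat \<Rightarrow> nat \<Rightarrow> real) \<Rightarrow> (nat \<Rightarrow> real) \<Rightarrow> nat \<Rightarrow> real" where
  "phi r n \<omega> u = (THE \<phi>. (\<forall>i\<in>Vset n. Lap r n \<omega> \<phi> i = u i - avg r n \<omega> u i)
                         \<and> mass r n \<omega> \<phi> = 0 \<and> (\<forall>i. i \<notin> Vset n \<longrightarrow> \<phi> i = 0))"

definition Lop :: "real \<Rightarrow> real \<Rightarrow> nat \<Rightarrow> (nat \<Rightarrow> nat \<Rightarrow> real) \<Rightarrow> (nat \<Rightarrow> real) \<Rightarrow> nat \<Rightarrow> real" where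
  "Lop r \<gamma> n \<omega> u i = Lap r n \<omega> u i + \<gamma> * phi r n \<omega> u i"

definition eqmeas :: "real \<Rightarrow> nat \<Rightarrow> (nat \<Rightarrow> nat \<Rightarrow> real) \<Rightarrow> nat set \<Rightarrow> nat \<Rightarrow> real" where
  "eqmeas r n \<omega> S = (THE \<nu>. (\<forall>i\<in>S. Lap r n \<omega> \<nu> i = 1) \<and> (\<forall>i. i \<notin> S \<longrightarrow> \<nu> i = 0))"

definition fvec :: "real \<Rightarrow> nat \<Rightarrow> (nat \<Rightarrow> nat \<Rightarrow> real) \<Rightarrow> nat \<Rightarrow> nat \<Rightarrow> real" where
  "fvec r n \<omega> j i = eqmeas r n \<omega> (Vset n - {j}) i - avg r n \<omega> (eqmeas r n \<omega> (Vset n - {j})) i"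

definition classC0 :: "real \<Rightarrow> nat \<Rightarrow> (nat \<Rightarrow> nat \<Rightarrow> real) \<Rightarrow> bool" where
  "classC0 r n \<omega> \<longleftrightarrow> is_graph n \<omega> \<and>
     (\<forall>j\<in>Vset n. \<forall>i\<in>Vset n. i \<noteq> j \<longrightarrow> \<omega> i j > 0 \<or> fvec r n \<omega> j i \<ge> 0)"

definition classC :: "real \<Rightarrow> real \<Rightarrow> nat \<Rightarrow> (nat \<Rightarrow> nat \<Rightarrow> real) \<Rightarrow> bool" where
  "classC r \<gamma> n \<omega> \<longleftrightarrow> (if \<gamma> = 0 then is_graph n \<omega> else
     classC0 r n \<omega> \<and>
     (\<forall>j\<in>Vset n. \<forall>i\<in>Vset n. i \<noteq> j \<longrightarrow> \<omega> i j = 0 \<or>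
        deg n \<omega> i powr (-r) * \<omega> i j + \<gamma> * deg n \<omega> j powr r / vol r n \<omega> * fvec r n \<omega> j i > 0))"

definition supnorm :: "nat \<Rightarrow> (nat \<Rightarrow> real) \<Rightarrow> real" where
  "supnorm n u = Max ((\<lambda>i. \<bar>u i\<bar>) ` Vset n)"

end

theory Submission
  imports Defs "Jordan_Normal_Form.Determinant"
begin

text \<open>Writing phi(u) through the functions f^j exhibits L as a weighted graph Laplacian,
  (L u)_i = sum_j (u_i - u_j) (d_i^-r w_ij + gamma d_j^r f^j_i / vol(V)), whose weights are
  nonnegative by the definition of C_gamma. Hence L u is nonnegative at a maximal vertex
  and nonpositive at a minimal one, and the flow dw/dt = -L w can never push a component above the
  initial maximum or below the initial minimum: at the first time a component exceeded its bound
  by a small margin growing linearly in time, that component would already be decreasing.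
  Existence of the equilibrium measures, needed for the formula for phi, comes from the
  maximum principle (the Dirichlet problem is uniquely solvable) and finite dimensionality.\<close>

lemma Vset_eq_image_Suc: "Vset n = Suc ` {..<n}"
  by (simp add: Vset_def image_Suc_lessThan)

lemma finite_Vset [simp]: "finite (Vset n)"
  by (simp add: Vset_def)

lemma abs_le_supnorm: "i \<in> Vset n \<Longrightarrow> \<bar>u i\<bar> \<le> supnorm n u"
  unfolding supnorm_def by (intro Max_ge) auto

lemma supnorm_le: "Vset n \<noteq> {} \<Longrightarrow> (\<And>i. i \<in> Vset n \<Longrightarrow> \<bar>u i\<bar> \<le> N) \<Longrightarrow> supnorm n u \<le> N"
  unfolding supnorm_def by (simp add: Max_le_iff)

lemma linear_system_solvable:
  fixes a :: "nat \<Rightarrow> nat \<Rightarrow> real" and b :: "nat \<Rightarrow> real"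
  assumes unique: "\<And>u. \<forall>i\<in>Vset n. (\<Sum>l\<in>Vset n. a i l * u l) = 0 \<Longrightarrow> \<forall>i\<in>Vset n. u i = 0"
  shows "\<exists>u. (\<forall>i\<in>Vset n. (\<Sum>l\<in>Vset n. a i l * u l) = b i) \<and> (\<forall>i. i \<notin> Vset n \<longrightarrow> u i = 0)"
proof -
  define A :: "real mat" where "A = Matrix.mat n n (\<lambda>(x, y). a (Suc x) (Suc y))"
  define fun_of :: "real vec \<Rightarrow> nat \<Rightarrow> real"
    where "fun_of v k = (if k \<in> Vset n then v $ (k - 1) else 0)" for v k
  have A: "A \<in> carrier_mat n n" by (simp add: A_def)
  have mult: "(A *\<^sub>v v) $ x = (\<Sum>l\<in>Vset n. a (Suc x) l * fun_of v l)"
    if "v \<in> carrier_vec n" "x < n" for v x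
  proof -
    have "(A *\<^sub>v v) $ x = (\<Sum>y<n. a (Suc x) (Suc y) * v $ y)"
      using that by (simp add: A_def scalar_prod_def atLeast0LessThan)
    also have "\<dots> = (\<Sum>l\<in>Vset n. a (Suc x) l * fun_of v l)"
      by (simp add: Vset_eq_image_Suc sum.reindex fun_of_def)
    finally show ?thesis .
  qed
  have "det A \<noteq> 0"
  proof
    assume "det A = 0"
    then obtain v where v: "v \<in> carrier_vec n" "v \<noteq> 0\<^sub>v n" "A *\<^sub>v v = 0\<^sub>v n"
      using det_0_iff_vec_prod_zero_field[OF A] by blast
    have "\<forall>i\<in>Vset n. (\<Sum>l\<in>Vset n. a i l * fun_of v l) = 0"
      using mult[OF v(1)] v(3) by (auto simp: Vset_eq_image_Suc)
    then have "\<forall>i\<in>Vset n. fun_of v i = 0" by (rule unique)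
    then have "v = 0\<^sub>v n"
      using v(1) by (intro eq_vecI) (auto simp: fun_of_def Vset_eq_image_Suc)
    with v(2) show False ..
  qed
  then obtain B where B: "B \<in> carrier_mat n n" "A * B = 1\<^sub>m n"
    using det_non_zero_imp_unit[OF A] unfolding Units_def ring_mat_def by auto
  define v where "v = B *\<^sub>v Matrix.vec n (\<lambda>x. b (Suc x))"
  have v: "v \<in> carrier_vec n" using B(1) by (simp add: v_def)
  have "A *\<^sub>v v = Matrix.vec n (\<lambda>x. b (Suc x))"
    using B by (simp add: v_def assoc_mult_mat_vec[OF A B(1), symmetric])
  then have "\<forall>i\<in>Vset n. (\<Sum>l\<in>Vset n. a i l * fun_of v l) = b i"
    using mult[OF v] by (auto simp: Vset_eq_image_Suc)
  then show ?thesis by (intro exI[of _ "fun_of v"]) (auto simp: fun_of_def)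
qed

lemma ode_upper_bound_eps:
  fixes w :: "real \<Rightarrow> 'a \<Rightarrow> real" and F :: "('a \<Rightarrow> real) \<Rightarrow> 'a \<Rightarrow> real"
  assumes "finite V"
    and at_max: "\<And>t i. t \<ge> 0 \<Longrightarrow> i \<in> V \<Longrightarrow> \<forall>j\<in>V. w t j \<le> w t i \<Longrightarrow> F (w t) i \<le> 0"
    and deriv: "\<And>i t. i \<in> V \<Longrightarrow> t \<ge> 0 \<Longrightarrow>
               ((\<lambda>s. w s i) has_real_derivative F (w t) i) (at t within {0..})"
    and init: "\<And>i. i \<in> V \<Longrightarrow> w 0 i \<le> c"
    and "\<epsilon> > 0" and "t \<ge> 0" and "i \<in> V"
  shows "w t i < c + \<epsilon> + \<epsilon> * t"
proof (rule ccontr)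
  define h where "h i = (\<lambda>s. w s i - \<epsilon> * s)" for i
  define S where "S = (\<Union>i\<in>V. {s \<in> {0..}. c + \<epsilon> \<le> h i s})"
  have h_deriv: "(h i has_real_derivative F (w s) i - \<epsilon>) (at s within {0..})"
    if "i \<in> V" "s \<ge> 0" for i s
  proof -
    have "((\<lambda>s. \<epsilon> * s) has_real_derivative \<epsilon>) (at s within {0..})"
      using DERIV_cmult[OF DERIV_ident, of \<epsilon>] by simp
    then show ?thesis unfolding h_def by (rule DERIV_diff[OF deriv[OF that]])
  qed
  have "continuous_on {0..} (h i)" if "i \<in> V" for i
    using h_deriv[OF that] by (auto simp: continuous_on_eq_continuous_within intro: DERIV_continuous)
  then have "closed S"
    unfolding S_def using \<open>finite V\<close> by (intro closed_UN ballI continuous_on_closed_Collect_le) auto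
  assume "\<not> w t i < c + \<epsilon> + \<epsilon> * t"
  then have "t \<in> S" using \<open>t \<ge> 0\<close> \<open>i \<in> V\<close> unfolding S_def h_def by force
  have bdd: "bdd_below S" by (rule bdd_belowI[of _ 0]) (auto simp: S_def)
  define T where "T = Inf S"
  have "T \<in> S" unfolding T_def using \<open>t \<in> S\<close> bdd \<open>closed S\<close> by (intro closed_contains_Inf) auto
  then obtain k where k: "k \<in> V" "T \<ge> 0" "c + \<epsilon> \<le> h k T" by (auto simp: S_def)
  have "T \<noteq> 0" using k init[of k] \<open>\<epsilon> > 0\<close> by (auto simp: h_def)
  with k have "T > 0" by simp
  have "Max (w T ` V) \<in> w T ` V" using \<open>finite V\<close> k(1) by (intro Max_in) auto
  then obtain i where "i \<in> V" "w T i = Max (w T ` V)" by auto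
  with \<open>finite V\<close> have i: "i \<in> V" "\<forall>j\<in>V. w T j \<le> w T i" by simp_all
  have "c + \<epsilon> \<le> h i T" using k i by (auto simp: h_def)
  have "at T within {0..} = at T" using \<open>T > 0\<close> by (intro at_within_interior) simp
  then have "(h i has_real_derivative F (w T) i - \<epsilon>) (at T)"
    using h_deriv[OF i(1) k(2)] by simp
  moreover have "F (w T) i - \<epsilon> < 0" using at_max[OF k(2) i] \<open>\<epsilon> > 0\<close> by simp
  ultimately obtain d where d: "d > 0" "\<And>e. e > 0 \<Longrightarrow> e < d \<Longrightarrow> h i T < h i (T - e)"
    using DERIV_neg_dec_left by blast
  define e where "e = min d T / 2"
  have e: "0 < e" "e < d" "e \<le> T" using d(1) \<open>T > 0\<close> by (auto simp: e_def)
  with d(2) \<open>c + \<epsilon> \<le> h i T\<close> have "c + \<epsilon> \<le> h i (T - e)" by fastforce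
  with i(1) e have "T - e \<in> S" by (auto simp: S_def)
  then have "T \<le> T - e" unfolding T_def using bdd by (rule cInf_lower)
  with e show False by simp
qed

lemma ode_upper_bound:
  fixes w :: "real \<Rightarrow> 'a \<Rightarrow> real" and F :: "('a \<Rightarrow> real) \<Rightarrow> 'a \<Rightarrow> real"
  assumes "finite V"
    and "\<And>t i. t \<ge> 0 \<Longrightarrow> i \<in> V \<Longrightarrow> \<forall>j\<in>V. w t j \<le> w t i \<Longrightarrow> F (w t) i \<le> 0"
    and "\<And>i t. i \<in> V \<Longrightarrow> t \<ge> 0 \<Longrightarrow>
           ((\<lambda>s. w s i) has_real_derivative F (w t) i) (at t within {0..})"
    and "\<And>i. i \<in> V \<Longrightarrow> w 0 i \<le> c"
    and "t \<ge> 0" and "i \<in> V"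
  shows "w t i \<le> c"
proof (rule field_le_epsilon)
  fix e :: real assume "e > 0"
  with \<open>t \<ge> 0\<close> have "e / (1 + t) > 0" by simp
  from ode_upper_bound_eps[where w = w and F = F, OF assms(1-4) this assms(5,6)]
  have "w t i < c + (e / (1 + t) + e / (1 + t) * t)" by linarith
  also have "e / (1 + t) + e / (1 + t) * t = e / (1 + t) * (1 + t)"
    by (simp only: distrib_left mult_1_right)
  also have "\<dots> = e" using \<open>t \<ge> 0\<close> by simp
  finally show "w t i \<le> c + e" by linarith
qed

lemma ode_bounds_preserved:
  fixes w :: "real \<Rightarrow> 'a \<Rightarrow> real" and F :: "('a \<Rightarrow> real) \<Rightarrow> 'a \<Rightarrow> real"
  assumes "finite V"
    and at_max: "\<And>t i. t \<ge> 0 \<Longrightarrow> i \<in> V \<Longrightarrow> \<forall>j\<in>V. w t j \<le> w t i \<Longrightarrow> F (w t) i \<le> 0"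
    and at_min: "\<And>t i. t \<ge> 0 \<Longrightarrow> i \<in> V \<Longrightarrow> \<forall>j\<in>V. w t i \<le> w t j \<Longrightarrow> F (w t) i \<ge> 0"
    and deriv: "\<And>i t. i \<in> V \<Longrightarrow> t \<ge> 0 \<Longrightarrow>
           ((\<lambda>s. w s i) has_real_derivative F (w t) i) (at t within {0..})"
    and init: "\<And>i. i \<in> V \<Longrightarrow> c1 \<le> w 0 i \<and> w 0 i \<le> c2"
    and "t \<ge> 0" and "i \<in> V"
  shows "c1 \<le> w t i \<and> w t i \<le> c2"
proof
  have "- w t i \<le> - c1"
  proof (rule ode_upper_bound[where w = "\<lambda>s k. - w s k" and F = "\<lambda>u k. - F (\<lambda>l. - u l) k"])
    show "- F (\<lambda>l. - (- w t l)) i \<le> 0"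
      if "t \<ge> 0" "i \<in> V" "\<forall>j\<in>V. - w t j \<le> - w t i" for t i
      using at_min[OF that(1,2)] that(3) by simp
    show "((\<lambda>s. - w s i) has_real_derivative - F (\<lambda>l. - (- w t l)) i) (at t within {0..})"
      if "i \<in> V" "t \<ge> 0" for i t
      using DERIV_minus[OF deriv[OF that]] by simp
    show "- w 0 i \<le> - c1" if "i \<in> V" for i
      using init[OF that] by simp
  qed (fact assms)+
  then show "c1 \<le> w t i" by simp
  show "w t i \<le> c2"
  proof (rule ode_upper_bound[where w = w and F = F])
    show "w 0 i \<le> c2" if "i \<in> V" for i
      using init[OF that] by simp
  qed (fact assms)+
qed

locale weighted_graph =
  fixes n :: nat and \<omega> :: "nat \<Rightarrow> nat \<Rightarrow> real" and r :: real
  assumes graph: "is_graph n \<omega>"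
begin

lemma Vset_nonempty: "Vset n \<noteq> {}"
  using graph by (auto simp: is_graph_def Vset_def)

lemma weight_sym: "\<omega> i j = \<omega> j i"
  using graph by (simp add: is_graph_def)

lemma weight_nonneg: "\<omega> i j \<ge> 0"
  using graph by (simp add: is_graph_def)

lemma connected:
  "i \<in> Vset n \<Longrightarrow> j \<in> Vset n \<Longrightarrow> (\<lambda>a b. a \<in> Vset n \<and> b \<in> Vset n \<and> \<omega> a b > 0)\<^sup>*\<^sup>* i j"
  using graph unfolding is_graph_def by blast

lemma deg_pos:
  assumes i: "i \<in> Vset n"
  shows "deg n \<omega> i > 0"
proof -
  obtain k where k: "k \<in> Vset n" "k \<noteq> i"
    using graph i by (cases "i = 1") (auto simp: is_graph_def Vset_def intro: that[of 1] that[of 2])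
  from connected[OF i k(1)] k(2) obtain a where a: "a \<in> Vset n" "\<omega> i a > 0"
    by (metis (no_types, lifting) converse_rtranclpE)
  have "\<omega> i a \<le> deg n \<omega> i"
    unfolding deg_def using a(1) by (intro member_le_sum) (auto simp: weight_nonneg)
  with a show ?thesis by linarith
qed

lemma deg_powr_pos:
  assumes "i \<in> Vset n" shows "deg n \<omega> i powr s > 0"
  using deg_pos[OF assms] by simp

lemma vol_pos: "vol r n \<omega> > 0"
  unfolding vol_def by (rule sum_pos) (use Vset_nonempty deg_powr_pos in auto)

lemma sum_deg_powr_div_vol: "(\<Sum>j\<in>Vset n. deg n \<omega> j powr r / vol r n \<omega>) = 1"
  using vol_pos by (simp add: vol_def sum_divide_distrib[symmetric])

lemma edge_closed_eq_Vset:
  assumes "Z \<subseteq> Vset n" "z \<in> Z"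
    and closed: "\<And>a b. a \<in> Z \<Longrightarrow> b \<in> Vset n \<Longrightarrow> \<omega> a b > 0 \<Longrightarrow> b \<in> Z"
  shows "Z = Vset n"
proof
  show "Vset n \<subseteq> Z"
  proof
    fix k assume "k \<in> Vset n"
    with assms have "(\<lambda>a b. a \<in> Vset n \<and> b \<in> Vset n \<and> \<omega> a b > 0)\<^sup>*\<^sup>* z k"
      by (intro connected) auto
    then show "k \<in> Z"
      by (induction rule: rtranclp_induct) (use assms in auto)
  qed
qed (fact assms)

lemma Lap_eq_sum: "Lap r n \<omega> u i = (\<Sum>j\<in>Vset n. (u i - u j) * (deg n \<omega> i powr (-r) * \<omega> i j))"
  unfolding Lap_def sum_distrib_left by (intro sum.cong) (auto simp: algebra_simps)

lemma Lap_scale_add: "Lap r n \<omega> (\<lambda>k. a * u k + v k) i = a * Lap r n \<omega> u i + Lap r n \<omega> v i"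
  unfolding Lap_eq_sum sum_distrib_left sum.distrib[symmetric] by (intro sum.cong) (auto simp: algebra_simps)

lemma Lap_uminus: "Lap r n \<omega> (\<lambda>k. - u k) i = - Lap r n \<omega> u i"
  unfolding Lap_eq_sum sum_negf[symmetric] by (intro sum.cong) (auto simp: algebra_simps)

lemma Lap_diff: "Lap r n \<omega> (\<lambda>k. u k - v k) i = Lap r n \<omega> u i - Lap r n \<omega> v i"
  unfolding Lap_eq_sum sum_subtractf[symmetric] by (intro sum.cong) (auto simp: algebra_simps)

lemma Lap_sum:
  "finite J \<Longrightarrow> Lap r n \<omega> (\<lambda>k. \<Sum>j\<in>J. c j * g j k) i = (\<Sum>j\<in>J. c j * Lap r n \<omega> (g j) i)"
proof (induction J rule: finite_induct)
  case (insert x J)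
  then show ?case
    using Lap_scale_add[of "c x" "g x" "\<lambda>k. \<Sum>j\<in>J. c j * g j k"] by simp
qed (simp add: Lap_def)

lemma Lap_add_const:
  "(\<And>k. k \<in> Vset n \<Longrightarrow> u k = v k + c) \<Longrightarrow> i \<in> Vset n \<Longrightarrow> Lap r n \<omega> u i = Lap r n \<omega> v i"
  unfolding Lap_def by (simp cong: sum.cong)

text \<open>Summation by parts: the symmetric weights cancel.\<close>
lemma mass_Lap: "mass r n \<omega> (Lap r n \<omega> u) = 0"
proof -
  have "deg n \<omega> k powr r * Lap r n \<omega> u k = (\<Sum>j\<in>Vset n. \<omega> k j * (u k - u j))"
    if "k \<in> Vset n" for k
  proof -
    have "deg n \<omega> k powr r * deg n \<omega> k powr (-r) = 1"
      using deg_pos[OF that] by (simp add: powr_minus)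
    then show ?thesis by (simp add: Lap_def mult.assoc[symmetric])
  qed
  then have "mass r n \<omega> (Lap r n \<omega> u) = (\<Sum>k\<in>Vset n. \<Sum>j\<in>Vset n. \<omega> k j * (u k - u j))"
    by (simp add: mass_def)
  moreover have "(\<Sum>k\<in>Vset n. \<Sum>j\<in>Vset n. \<omega> k j * u j) = (\<Sum>k\<in>Vset n. \<Sum>j\<in>Vset n. \<omega> k j * u k)"
    by (subst sum.swap) (simp add: weight_sym)
  ultimately show ?thesis by (simp add: right_diff_distrib sum_subtractf)
qed

lemma mass_sum:
  "mass r n \<omega> (\<lambda>k. \<Sum>j\<in>J. c j * g j k) = (\<Sum>j\<in>J. c j * mass r n \<omega> (g j))"
proof -
  have "mass r n \<omega> (\<lambda>k. \<Sum>j\<in>J. c j * g j k)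
      = (\<Sum>i\<in>Vset n. \<Sum>j\<in>J. c j * (deg n \<omega> i powr r * g j i))"
    by (simp add: mass_def sum_distrib_left mult.left_commute)
  also have "\<dots> = (\<Sum>j\<in>J. \<Sum>i\<in>Vset n. c j * (deg n \<omega> i powr r * g j i))"
    by (rule sum.swap)
  also have "\<dots> = (\<Sum>j\<in>J. c j * mass r n \<omega> (g j))"
    by (simp add: mass_def sum_distrib_left)
  finally show ?thesis .
qed

lemma neighbour_eq_at_max:
  assumes i: "i \<in> Vset n" and "Lap r n \<omega> u i \<le> 0" and max: "\<forall>k\<in>Vset n. u k \<le> u i"
    and "j \<in> Vset n" "\<omega> i j > 0"
  shows "u j = u i"
proof -
  have terms_nonneg: "\<forall>k\<in>Vset n. 0 \<le> (u i - u k) * \<omega> i k"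
    using max weight_nonneg by simp
  then have "0 \<le> (\<Sum>k\<in>Vset n. (u i - u k) * \<omega> i k)" by (simp add: sum_nonneg)
  moreover have "deg n \<omega> i powr (-r) * (\<Sum>k\<in>Vset n. (u i - u k) * \<omega> i k) \<le> 0"
    using \<open>Lap r n \<omega> u i \<le> 0\<close> by (simp add: Lap_eq_sum sum_distrib_left mult_ac)
  ultimately have "(\<Sum>k\<in>Vset n. (u i - u k) * \<omega> i k) = 0"
    using deg_powr_pos[OF i] by (simp add: mult_le_0_iff)
  then have "(u i - u j) * \<omega> i j = 0"
    using terms_nonneg \<open>j \<in> Vset n\<close> by (simp add: sum_nonneg_eq_0_iff)
  with \<open>\<omega> i j > 0\<close> show ?thesis by simp
qed

lemma const_if_Lap_nonpos_at_max:
  assumes at_max: "\<And>a. a \<in> Vset n \<Longrightarrow> \<forall>k\<in>Vset n. u k \<le> u a \<Longrightarrow> Lap r n \<omega> u a \<le> 0"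
    and "i \<in> Vset n" "j \<in> Vset n"
  shows "u i = u j"
proof -
  define M where "M = Max (u ` Vset n)"
  have "M \<in> u ` Vset n" unfolding M_def using Vset_nonempty by (intro Max_in) auto
  then obtain z where z: "z \<in> Vset n" "u z = M" by auto
  have le_M: "\<forall>k\<in>Vset n. u k \<le> M" by (simp add: M_def)
  have "{k \<in> Vset n. u k = M} = Vset n"
  proof (rule edge_closed_eq_Vset)
    show "b \<in> {k \<in> Vset n. u k = M}"
      if "a \<in> {k \<in> Vset n. u k = M}" "b \<in> Vset n" "\<omega> a b > 0" for a b
      using that neighbour_eq_at_max[of a u b] at_max[of a] le_M by auto
  qed (use z in auto)
  with assms(2,3) show ?thesis by (metis (mono_tags, lifting) mem_Collect_eq)
qed

lemma harmonic_const:
  "(\<And>i. i \<in> Vset n \<Longrightarrow> Lap r n \<omega> u i = 0) \<Longrightarrow> i \<in> Vset n \<Longrightarrow> j \<in> Vset n \<Longrightarrow> u i = u j"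
  by (rule const_if_Lap_nonpos_at_max) auto

lemma harmonic_off_vertex_vanishing:
  assumes j: "j \<in> Vset n" and harmonic: "\<And>i. i \<in> Vset n \<Longrightarrow> i \<noteq> j \<Longrightarrow> Lap r n \<omega> u i = 0"
    and "u j = 0" and "i \<in> Vset n"
  shows "u i = 0"
proof -
  have nonpos: "v i \<le> 0"
    if harm: "\<And>i. i \<in> Vset n \<Longrightarrow> i \<noteq> j \<Longrightarrow> Lap r n \<omega> v i = 0" and "v j = 0" and "i \<in> Vset n"
    for v i
  proof (rule ccontr)
    assume "\<not> v i \<le> 0"
    have "Lap r n \<omega> v a \<le> 0" if "a \<in> Vset n" "\<forall>k\<in>Vset n. v k \<le> v a" for a
    proof -
      have "a \<noteq> j" using that \<open>\<not> v i \<le> 0\<close> \<open>v j = 0\<close> \<open>i \<in> Vset n\<close> by force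
      with harm \<open>a \<in> Vset n\<close> show ?thesis by simp
    qed
    then have "v i = v j"
      using \<open>i \<in> Vset n\<close> j by (intro const_if_Lap_nonpos_at_max)
    with \<open>\<not> v i \<le> 0\<close> \<open>v j = 0\<close> show False by simp
  qed
  have "u i \<le> 0" using nonpos assms by blast
  moreover have "- u i \<le> 0"
    using nonpos[of "\<lambda>k. - u k"] assms by (simp add: Lap_uminus)
  ultimately show ?thesis by simp
qed

lemma eqmeas_exists:
  assumes j: "j \<in> Vset n"
  shows "\<exists>\<nu>. (\<forall>i\<in>Vset n - {j}. Lap r n \<omega> \<nu> i = 1) \<and> (\<forall>i. i \<notin> Vset n - {j} \<longrightarrow> \<nu> i = 0)"
proof -
  \<comment> \<open>row j of the linear system prescribes the value at j, the other rows are the Laplacian\<close>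
  define a where "a k l = (if k = j then (if l = j then 1 else 0)
      else deg n \<omega> k powr (-r) * ((if l = k then deg n \<omega> k else 0) - \<omega> k l))" for k l
  have system: "(\<Sum>l\<in>Vset n. a k l * u l) = (if k = j then u j else Lap r n \<omega> u k)"
    if "k \<in> Vset n" for k u
  proof (cases "k = j")
    case False
    have "(\<Sum>l\<in>Vset n. a k l * u l) = (\<Sum>l\<in>Vset n. deg n \<omega> k powr (-r) *
        ((if l = k then deg n \<omega> k * u k else 0) - \<omega> k l * u l))"
      by (intro sum.cong refl) (simp add: a_def False left_diff_distrib)
    also have "\<dots> = deg n \<omega> k powr (-r) * (deg n \<omega> k * u k - (\<Sum>l\<in>Vset n. \<omega> k l * u l))"
      using that by (simp add: sum_distrib_left[symmetric] sum_subtractf)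
    also have "\<dots> = Lap r n \<omega> u k"
      by (simp add: Lap_def deg_def right_diff_distrib sum_subtractf sum_distrib_right)
    finally show ?thesis using False by simp
  next
    case True
    then have "(\<Sum>l\<in>Vset n. a k l * u l) = (\<Sum>l\<in>Vset n. if l = j then u l else 0)"
      by (intro sum.cong) (auto simp: a_def)
    with True j show ?thesis by simp
  qed
  have "\<exists>\<nu>. (\<forall>k\<in>Vset n. (\<Sum>l\<in>Vset n. a k l * \<nu> l) = (if k = j then 0 else 1))
          \<and> (\<forall>k. k \<notin> Vset n \<longrightarrow> \<nu> k = 0)"
  proof (rule linear_system_solvable)
    fix u assume homogeneous: "\<forall>k\<in>Vset n. (\<Sum>l\<in>Vset n. a k l * u l) = 0"
    have "Lap r n \<omega> u k = 0" if "k \<in> Vset n" "k \<noteq> j" for k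
      using homogeneous system[OF that(1), of u] that by simp
    moreover have "u j = 0" using homogeneous system[OF j, of u] j by simp
    ultimately show "\<forall>k\<in>Vset n. u k = 0"
      using harmonic_off_vertex_vanishing[OF j] by blast
  qed
  then obtain \<nu> where \<nu>: "\<forall>k\<in>Vset n. (\<Sum>l\<in>Vset n. a k l * \<nu> l) = (if k = j then 0 else 1)"
    "\<forall>k. k \<notin> Vset n \<longrightarrow> \<nu> k = 0"
    by blast
  have "\<nu> j = 0" using \<nu>(1) system[OF j, of \<nu>] j by simp
  moreover have "Lap r n \<omega> \<nu> i = 1" if "i \<in> Vset n - {j}" for i
    using \<nu>(1) system[of i \<nu>] that by simp
  ultimately show ?thesis using \<nu>(2) by blast
qed

lemma eqmeas_eqI:
  assumes j: "j \<in> Vset n"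
    and \<nu>: "\<forall>i\<in>Vset n - {j}. Lap r n \<omega> \<nu> i = 1" "\<forall>i. i \<notin> Vset n - {j} \<longrightarrow> \<nu> i = 0"
  shows "eqmeas r n \<omega> (Vset n - {j}) = \<nu>"
  unfolding eqmeas_def
proof (rule the_equality)
  fix \<mu> assume \<mu>: "(\<forall>i\<in>Vset n - {j}. Lap r n \<omega> \<mu> i = 1) \<and> (\<forall>i. i \<notin> Vset n - {j} \<longrightarrow> \<mu> i = 0)"
  have "Lap r n \<omega> (\<lambda>k. \<mu> k - \<nu> k) i = 0" if "i \<in> Vset n" "i \<noteq> j" for i
    using \<mu> \<nu> that by (simp add: Lap_diff)
  then have "\<mu> i - \<nu> i = 0" if "i \<in> Vset n" for i
    using harmonic_off_vertex_vanishing[OF j, of "\<lambda>k. \<mu> k - \<nu> k"] \<mu> \<nu> j that by simp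
  with \<mu> \<nu> show "\<mu> = \<nu>" by (metis Diff_iff eq_iff_diff_eq_0 ext)
qed (use \<nu> in blast)

lemma
  assumes "j \<in> Vset n"
  shows Lap_eqmeas: "i \<in> Vset n - {j} \<Longrightarrow> Lap r n \<omega> (eqmeas r n \<omega> (Vset n - {j})) i = 1"
    and eqmeas_outside: "i \<notin> Vset n - {j} \<Longrightarrow> eqmeas r n \<omega> (Vset n - {j}) i = 0"
proof -
  obtain \<nu> where \<nu>: "\<forall>i\<in>Vset n - {j}. Lap r n \<omega> \<nu> i = 1" "\<forall>i. i \<notin> Vset n - {j} \<longrightarrow> \<nu> i = 0"
    using eqmeas_exists[OF assms] by blast
  then have "eqmeas r n \<omega> (Vset n - {j}) = \<nu>" by (rule eqmeas_eqI[OF assms])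
  with \<nu> show "i \<in> Vset n - {j} \<Longrightarrow> Lap r n \<omega> (eqmeas r n \<omega> (Vset n - {j})) i = 1"
    and "i \<notin> Vset n - {j} \<Longrightarrow> eqmeas r n \<omega> (Vset n - {j}) i = 0" by simp_all
qed

text \<open>At the removed vertex the value is forced by the vanishing mass of a Laplacian.\<close>
lemma deg_powr_Lap_eqmeas:
  assumes j: "j \<in> Vset n"
  shows "deg n \<omega> j powr r * Lap r n \<omega> (eqmeas r n \<omega> (Vset n - {j})) j = deg n \<omega> j powr r - vol r n \<omega>"
proof -
  have "0 = mass r n \<omega> (Lap r n \<omega> (eqmeas r n \<omega> (Vset n - {j})))" by (simp add: mass_Lap)
  also have "\<dots> = deg n \<omega> j powr r * Lap r n \<omega> (eqmeas r n \<omega> (Vset n - {j})) j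
      + (\<Sum>k\<in>Vset n - {j}. deg n \<omega> k powr r)"
    unfolding mass_def using j by (simp add: sum.remove Lap_eqmeas)
  finally show ?thesis
    using sum.remove[of "Vset n" j "\<lambda>k. deg n \<omega> k powr r"] j by (simp add: vol_def)
qed

lemma fvec_outside: "j \<in> Vset n \<Longrightarrow> i \<notin> Vset n \<Longrightarrow> fvec r n \<omega> j i = 0"
  by (simp add: fvec_def avg_def eqmeas_outside)

lemma mass_fvec:
  assumes "j \<in> Vset n" shows "mass r n \<omega> (fvec r n \<omega> j) = 0"
proof -
  define \<nu> where "\<nu> = eqmeas r n \<omega> (Vset n - {j})"
  define m where "m = mass r n \<omega> \<nu> / vol r n \<omega>"
  have "mass r n \<omega> (fvec r n \<omega> j) = mass r n \<omega> \<nu> - vol r n \<omega> * m"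
    unfolding fvec_def avg_def \<nu>_def[symmetric] m_def[symmetric]
    by (simp add: mass_def vol_def right_diff_distrib sum_subtractf sum_distrib_right)
  then show ?thesis using vol_pos by (simp add: m_def)
qed

lemma Lap_fvec:
  assumes j: "j \<in> Vset n" and k: "k \<in> Vset n"
  shows "deg n \<omega> j powr r / vol r n \<omega> * Lap r n \<omega> (fvec r n \<omega> j) k
       = deg n \<omega> j powr r / vol r n \<omega> - of_bool (k = j)"
proof -
  have "Lap r n \<omega> (fvec r n \<omega> j) k = Lap r n \<omega> (eqmeas r n \<omega> (Vset n - {j})) k"
    using k by (intro Lap_add_const) (auto simp: fvec_def avg_def)
  then show ?thesis
    using deg_powr_Lap_eqmeas[OF j] Lap_eqmeas[OF j] k vol_pos by (auto simp: field_simps)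
qed

lemma phi_eqI:
  assumes \<psi>: "\<forall>i\<in>Vset n. Lap r n \<omega> \<psi> i = u i - avg r n \<omega> u i" "mass r n \<omega> \<psi> = 0"
    "\<forall>i. i \<notin> Vset n \<longrightarrow> \<psi> i = 0"
  shows "phi r n \<omega> u = \<psi>"
  unfolding phi_def
proof (rule the_equality)
  fix \<mu> assume \<mu>: "(\<forall>i\<in>Vset n. Lap r n \<omega> \<mu> i = u i - avg r n \<omega> u i) \<and> mass r n \<omega> \<mu> = 0
    \<and> (\<forall>i. i \<notin> Vset n \<longrightarrow> \<mu> i = 0)"
  define d where "d k = \<mu> k - \<psi> k" for k
  obtain z where z: "z \<in> Vset n" using Vset_nonempty by blast
  have const: "d k = d z" if "k \<in> Vset n" for k
    using \<mu> \<psi> that z by (intro harmonic_const) (auto simp: d_def Lap_diff)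
  have "d z * vol r n \<omega> = mass r n \<omega> d"
    by (simp add: mass_def vol_def sum_distrib_left const mult.commute cong: sum.cong)
  also have "\<dots> = 0"
    using \<mu> \<psi> by (simp add: d_def mass_def right_diff_distrib sum_subtractf)
  finally have "d z = 0" using vol_pos by simp
  with \<mu> \<psi> const show "\<mu> = \<psi>" by (metis d_def eq_iff_diff_eq_0 ext)
qed (use \<psi> in blast)

text \<open>The constant c is arbitrary since the weights d_j^r/vol(V) sum to one.\<close>
lemma phi_eq_sum_fvec:
  "phi r n \<omega> u = (\<lambda>k. \<Sum>j\<in>Vset n. (c - u j) * (deg n \<omega> j powr r / vol r n \<omega>) * fvec r n \<omega> j k)"
proof -
  define a where "a j = deg n \<omega> j powr r / vol r n \<omega>" for j
  have "phi r n \<omega> u = (\<lambda>k. \<Sum>j\<in>Vset n. (c - u j) * a j * fvec r n \<omega> j k)"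
  proof (rule phi_eqI)
    show "\<forall>k\<in>Vset n. Lap r n \<omega> (\<lambda>k. \<Sum>j\<in>Vset n. (c - u j) * a j * fvec r n \<omega> j k) k
        = u k - avg r n \<omega> u k"
    proof
      fix k assume k: "k \<in> Vset n"
      have Lap_a_fvec: "a j * Lap r n \<omega> (fvec r n \<omega> j) k = a j - of_bool (k = j)"
        if "j \<in> Vset n" for j
        using Lap_fvec[OF that k] by (simp add: a_def)
      have "Lap r n \<omega> (\<lambda>k. \<Sum>j\<in>Vset n. (c - u j) * a j * fvec r n \<omega> j k) k
          = (\<Sum>j\<in>Vset n. (c - u j) * (a j * Lap r n \<omega> (fvec r n \<omega> j) k))"
        using Lap_sum[where J="Vset n" and c="\<lambda>j. (c - u j) * a j" and g="fvec r n \<omega>" and i=k]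
        by (simp add: mult.assoc)
      also have "\<dots> = (\<Sum>j\<in>Vset n. (c - u j) * a j - (if j = k then c - u j else 0))"
        by (intro sum.cong refl) (auto simp: Lap_a_fvec right_diff_distrib)
      also have "\<dots> = c * (\<Sum>j\<in>Vset n. a j) - (\<Sum>j\<in>Vset n. u j * a j) - (c - u k)"
        using k by (simp add: left_diff_distrib sum_subtractf sum_distrib_left)
      also have "\<dots> = u k - avg r n \<omega> u k"
      proof -
        have "avg r n \<omega> u k = (\<Sum>j\<in>Vset n. u j * a j)"
          using k by (simp add: avg_def mass_def a_def sum_divide_distrib mult.commute)
        then show ?thesis using sum_deg_powr_div_vol by (simp add: a_def)
      qed
      finally show "Lap r n \<omega> (\<lambda>k. \<Sum>j\<in>Vset n. (c - u j) * a j * fvec r n \<omega> j k) k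
          = u k - avg r n \<omega> u k" .
    qed
    show "mass r n \<omega> (\<lambda>k. \<Sum>j\<in>Vset n. (c - u j) * a j * fvec r n \<omega> j k) = 0"
      by (simp add: mass_sum mass_fvec)
    show "\<forall>k. k \<notin> Vset n \<longrightarrow> (\<Sum>j\<in>Vset n. (c - u j) * a j * fvec r n \<omega> j k) = 0"
      by (simp add: fvec_outside)
  qed
  then show ?thesis by (simp add: a_def)
qed

lemma Lop_eq_sum:
  assumes "i \<in> Vset n"
  shows "Lop r \<gamma> n \<omega> u i = (\<Sum>j\<in>Vset n. (u i - u j) *
     (deg n \<omega> i powr (-r) * \<omega> i j + \<gamma> * deg n \<omega> j powr r / vol r n \<omega> * fvec r n \<omega> j i))"
proof -
  have "\<gamma> * phi r n \<omega> u i
      = (\<Sum>j\<in>Vset n. (u i - u j) * (\<gamma> * deg n \<omega> j powr r / vol r n \<omega> * fvec r n \<omega> j i))"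
    unfolding phi_eq_sum_fvec[of u "u i"] sum_distrib_left by (intro sum.cong refl) simp
  then show ?thesis
    unfolding Lop_def Lap_eq_sum by (simp add: sum.distrib[symmetric] distrib_left)
qed

lemma Lop_weight_nonneg:
  assumes C: "classC r \<gamma> n \<omega>" and "\<gamma> \<ge> 0" and ij: "i \<in> Vset n" "j \<in> Vset n" "j \<noteq> i"
  shows "0 \<le> deg n \<omega> i powr (-r) * \<omega> i j + \<gamma> * deg n \<omega> j powr r / vol r n \<omega> * fvec r n \<omega> j i"
proof (cases "\<gamma> = 0")
  case True
  then show ?thesis using deg_powr_pos[OF ij(1)] weight_nonneg[of i j] by simp
next
  case False
  with C have C0: "classC0 r n \<omega>"
    and C1: "\<omega> i j = 0 \<or>
      0 < deg n \<omega> i powr (-r) * \<omega> i j + \<gamma> * deg n \<omega> j powr r / vol r n \<omega> * fvec r n \<omega> j i"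
    unfolding classC_def if_not_P[OF False] using ij(2,1) not_sym[OF ij(3)] by blast+
  show ?thesis
  proof (cases "\<omega> i j = 0")
    case True
    have "\<omega> i j > 0 \<or> fvec r n \<omega> j i \<ge> 0"
      using C0 ij(2,1) not_sym[OF ij(3)] unfolding classC0_def by blast
    with True \<open>\<gamma> \<ge> 0\<close> vol_pos show ?thesis by simp
  next
    case False
    with C1 show ?thesis by simp
  qed
qed

lemma Lop_nonneg_at_max:
  assumes "classC r \<gamma> n \<omega>" "\<gamma> \<ge> 0" "i \<in> Vset n" and max: "\<forall>j\<in>Vset n. u j \<le> u i"
  shows "Lop r \<gamma> n \<omega> u i \<ge> 0"
  unfolding Lop_eq_sum[OF \<open>i \<in> Vset n\<close>]
proof (rule sum_nonneg)
  fix j assume "j \<in> Vset n"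
  then show "0 \<le> (u i - u j) * (deg n \<omega> i powr (-r) * \<omega> i j
      + \<gamma> * deg n \<omega> j powr r / vol r n \<omega> * fvec r n \<omega> j i)"
    using Lop_weight_nonneg[OF assms(1-3)] max by (cases "j = i") simp_all
qed

lemma Lop_nonpos_at_min:
  assumes "classC r \<gamma> n \<omega>" "\<gamma> \<ge> 0" "i \<in> Vset n" and min: "\<forall>j\<in>Vset n. u i \<le> u j"
  shows "Lop r \<gamma> n \<omega> u i \<le> 0"
  unfolding Lop_eq_sum[OF \<open>i \<in> Vset n\<close>]
proof (rule sum_nonpos)
  fix j assume "j \<in> Vset n"
  then show "(u i - u j) * (deg n \<omega> i powr (-r) * \<omega> i j
      + \<gamma> * deg n \<omega> j powr r / vol r n \<omega> * fvec r n \<omega> j i) \<le> 0"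
    using Lop_weight_nonneg[OF assms(1-3)] min by (cases "j = i") (simp_all add: mult_nonpos_nonneg)
qed

end

lemma classC_is_graph: "classC r \<gamma> n \<omega> \<Longrightarrow> is_graph n \<omega>"
  unfolding classC_def classC0_def by (auto split: if_splits)

theorem corollary6p28:
  fixes r \<gamma> c1 c2 :: real and n :: nat and \<omega> :: "nat \<Rightarrow> nat \<Rightarrow> real"
    and w :: "real \<Rightarrow> nat \<Rightarrow> real" and w0 :: "nat \<Rightarrow> real"
  assumes "0 \<le> r" "r \<le> 1" "\<gamma> \<ge> 0"
    and "classC r \<gamma> n \<omega>"
    and "\<And>i. i \<in> Vset n \<Longrightarrow> w 0 i = w0 i"
    and "\<And>i t. i \<in> Vset n \<Longrightarrow> t \<ge> 0 \<Longrightarrow>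
           ((\<lambda>s. w s i) has_real_derivative (- Lop r \<gamma> n \<omega> (w t) i)) (at t within {0..})"
    and "\<And>i. i \<in> Vset n \<Longrightarrow> c1 \<le> w0 i \<and> w0 i \<le> c2"
  shows "(\<forall>t\<ge>0. \<forall>i\<in>Vset n. c1 \<le> w t i \<and> w t i \<le> c2)
         \<and> (\<forall>t\<ge>0. supnorm n (w t) \<le> supnorm n w0)"
proof -
  interpret weighted_graph n \<omega> r using classC_is_graph[OF assms(4)] by unfold_locales
  have bounds: "a \<le> w t i \<and> w t i \<le> b"
    if init: "\<forall>i\<in>Vset n. a \<le> w0 i \<and> w0 i \<le> b" and "t \<ge> 0" "i \<in> Vset n" for a b t i
  proof (rule ode_bounds_preserved[where V = "Vset n" and w = w and F = "\<lambda>u i. - Lop r \<gamma> n \<omega> u i"])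
    show "- Lop r \<gamma> n \<omega> (w t) i \<le> 0"
      if "t \<ge> 0" "i \<in> Vset n" "\<forall>j\<in>Vset n. w t j \<le> w t i" for t i
      using Lop_nonneg_at_max[OF assms(4,3) that(2,3)] by simp
    show "- Lop r \<gamma> n \<omega> (w t) i \<ge> 0"
      if "t \<ge> 0" "i \<in> Vset n" "\<forall>j\<in>Vset n. w t i \<le> w t j" for t i
      using Lop_nonpos_at_min[OF assms(4,3) that(2,3)] by simp
    show "a \<le> w 0 i \<and> w 0 i \<le> b" if "i \<in> Vset n" for i
      using init assms(5) that by simp
  qed (fact finite_Vset assms(6) that)+
  have "supnorm n (w t) \<le> supnorm n w0" if "t \<ge> 0" for t
  proof (rule supnorm_le[OF Vset_nonempty])
    have "\<forall>k\<in>Vset n. - supnorm n w0 \<le> w0 k \<and> w0 k \<le> supnorm n w0"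
      using abs_le_supnorm[of _ n w0] by (force simp: abs_le_iff)
    then show "\<bar>w t i\<bar> \<le> supnorm n w0" if "i \<in> Vset n" for i
      using bounds[of "- supnorm n w0" "supnorm n w0" t i] \<open>t \<ge> 0\<close> that by (simp add: abs_le_iff)
  qed
  moreover have "\<forall>i\<in>Vset n. c1 \<le> w0 i \<and> w0 i \<le> c2" using assms(7) by blast
  then have "\<forall>t\<ge>0. \<forall>i\<in>Vset n. c1 \<le> w t i \<and> w t i \<le> c2" using bounds by blast
  ultimately show ?thesis by blast
qed

end
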